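(* Let $\tilde\rho:=1-(\epsilon^-/\epsilon^+)^2$. For every $n\ge1$ and every bounded measurable $\varphi$, for every $\mu'\in\mathcal{P}$, every $N\ge1$ and every realization of the $N$-particle system, \[ \left|\Big(\prod_{p=0}^{n-1}\lambda_p^N\Big)^{-1}\mu'Q^N_{0,n}(\varphi)-\mu'(h^N_{0,n})\,\eta_n^N(\varphi)\right|\le2\|\varphi\|\tilde\rho^n\frac{\epsilon^+}{\epsilon^-}, \] \[ \left|\frac{\mu'Q^N_{0,n}(\varphi)}{\mu'Q^N_{0,n}(1)}-\eta_n^N(\varphi)\right|\le2\|\varphi\|\tilde\rho^n\left(\frac{\epsilon^+}{\epsilon^-}\right)^2. \]
   Context: Setting: $(\mathsf{X},\mathcal{B})$ is a measurable space with countably generated $\sigma$-algebra; $\mathcal{P}$ the probability measures. For a measure $\mu$, kernel $K$, function $\varphi$: $\mu(\varphi)=\int\varphi\,d\mu$, $K(\varphi)(x)=\int K(x,dy)\varphi(y)$, $\mu K(\cdot)=\int\mu(dx)K(x,\cdot)$; $1$ is the constant function one; $\|\varphi\|=\sup_x|\varphi(x)|$. $G:\mathsf{X}\to(0,\infty)$ bounded measurable, $M$ a Markov kernel, $Q(x,dy):=G(x)M(x,dy)$. Assumption (H) (in force): there is a probability measure $\nu$ such that for all $x$, $Q(x,\cdot)$ is equivalent to $\nu$ with density $q(x,x')$ satisfying $\epsilon^-\le q\le\epsilon^+$ for constants $0<\epsilon^-,\epsilon^+<\infty$. For $\eta\in\mathcal{P}$, $\Phi(\eta):=\eta Q/\eta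 Q(1)$. Particle system: fix $N\ge1$ and $\mu\in\mathcal{P}$; $\zeta_0^1,\dots,\zeta_0^N$ i.i.d. $\mu$; for $n\ge1$, conditionally on the past, the $\zeta_n^i$ are i.i.d. with law $\Phi(\eta^N_{n-1})$, where $\eta_n^N:=\frac1N\sum_{i=1}^N\delta_{\zeta_n^i}$. Define $\lambda_n^N:=\eta_n^N(G)$, $Q_n^N(x,dx'):=\frac{dQ(x,\cdot)}{d\Phi(\eta_{n-1}^N)}(x')\,\eta_n^N(dx')$ for $n\ge1$, $Q^N_{n,n}:=Id$, $Q^N_{p,n}:=Q^N_{p+1}\cdots Q^N_n$ for $p<n$, and $h^N_{n,n}:=1$, $h_{p,n}^N(x):=\frac{Q^N_{p,n}(1)(x)}{\eta^N_pQ^N_{p,n}(1)}$ for $0\le p<n$. *)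

theory Defs
  imports "HOL-Probability.Probability"
begin

definition countably_generated :: "'a measure \<Rightarrow> bool" where
  "countably_generated X \<longleftrightarrow>
     (\<exists>C. countable C \<and> C \<subseteq> Pow (space X) \<and> sets X = sigma_sets (space X) C)"

definition supnorm :: "'a measure \<Rightarrow> ('a \<Rightarrow> real) \<Rightarrow> real" where
  "supnorm X f = (SUP x\<in>space X. \<bar>f x\<bar>)"

definition emp :: "nat \<Rightarrow> (nat \<Rightarrow> 'a) \<Rightarrow> ('a \<Rightarrow> real) \<Rightarrow> real" where
  "emp N z f = (\<Sum>i<N. f (z i)) / real N"

text \<open>The version of the Radon-Nikodym derivative dQ(x,.)/dPhi(eta)(x') determined by the
  density q, where eta is the empirical measure of z:
  Phi(eta)(dx') = eta(q(.,x')) / eta(G) nu(dx'), Q(x,dx') = q(x,x') nu(dx').\<close>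
definition dQdPhi :: "('a \<Rightarrow> real) \<Rightarrow> ('a \<Rightarrow> 'a \<Rightarrow> real) \<Rightarrow> nat \<Rightarrow> (nat \<Rightarrow> 'a) \<Rightarrow> 'a \<Rightarrow> 'a \<Rightarrow> real" where
  "dQdPhi G q N z x x' = q x x' * emp N z G / emp N z (\<lambda>w. q w x')"

text \<open>Q^N_n (n >= 1) acting on functions; zeta k i is the i-th particle at time k.\<close>
definition QN :: "('a \<Rightarrow> real) \<Rightarrow> ('a \<Rightarrow> 'a \<Rightarrow> real) \<Rightarrow> nat \<Rightarrow> (nat \<Rightarrow> nat \<Rightarrow> 'a) \<Rightarrow> nat
    \<Rightarrow> ('a \<Rightarrow> real) \<Rightarrow> 'a \<Rightarrow> real" where
  "QN G q N \<zeta> n f x = emp N (\<zeta> n) (\<lambda>x'. dQdPhi G q N (\<zeta> (n - 1)) x x' * f x')"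

text \<open>QNpk p k = Q^N_{p,p+k} = Q^N_{p+1} ... Q^N_{p+k}.\<close>
fun QNpk :: "('a \<Rightarrow> real) \<Rightarrow> ('a \<Rightarrow> 'a \<Rightarrow> real) \<Rightarrow> nat \<Rightarrow> (nat \<Rightarrow> nat \<Rightarrow> 'a) \<Rightarrow> nat \<Rightarrow> nat
    \<Rightarrow> ('a \<Rightarrow> real) \<Rightarrow> 'a \<Rightarrow> real" where
  "QNpk G q N \<zeta> p 0 f = f"
| "QNpk G q N \<zeta> p (Suc k) f = QN G q N \<zeta> (Suc p) (QNpk G q N \<zeta> (Suc p) k f)"

definition QNpn :: "('a \<Rightarrow> real) \<Rightarrow> ('a \<Rightarrow> 'a \<Rightarrow> real) \<Rightarrow> nat \<Rightarrow> (nat \<Rightarrow> nat \<Rightarrow> 'a) \<Rightarrow> nat \<Rightarrow> nat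
    \<Rightarrow> ('a \<Rightarrow> real) \<Rightarrow> 'a \<Rightarrow> real" where
  "QNpn G q N \<zeta> p n f = QNpk G q N \<zeta> p (n - p) f"

text \<open>h^N_{p,n}; for p = n this equals the constant 1 as in the paper.\<close>
definition hN :: "('a \<Rightarrow> real) \<Rightarrow> ('a \<Rightarrow> 'a \<Rightarrow> real) \<Rightarrow> nat \<Rightarrow> (nat \<Rightarrow> nat \<Rightarrow> 'a) \<Rightarrow> nat \<Rightarrow> nat
    \<Rightarrow> 'a \<Rightarrow> real" where
  "hN G q N \<zeta> p n x =
     (if n = p then 1
      else QNpn G q N \<zeta> p n (\<lambda>_. 1) x / emp N (\<zeta> p) (QNpn G q N \<zeta> p n (\<lambda>_. 1)))"

definition lambdaN :: "('a \<Rightarrow> real) \<Rightarrow> nat \<Rightarrow> (nat \<Rightarrow> nat \<Rightarrow> 'a) \<Rightarrow> nat \<Rightarrow> real" where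
  "lambdaN G N \<zeta> p = emp N (\<zeta> p) G"

end

theory Submission imports Defs begin

(* The proof is entirely pathwise: for a fixed realisation zeta of the particle
   system every object is a finite sum over the particles.
   1. Two elementary facts on finite sums: a weighted average of numbers close to c
      is close to c, and the Birkhoff-type contraction of ratios of two positive
      weightings that are comparable up to a factor s shrinks oscillations by 1 - s^2.
   2. Under the density bounds em <= q <= ep, the kernels dQ/dPhi(eta) at two starting
      points are comparable up to the factor em/ep.  Iterating the contraction gives
      osc(Q_{p,p+k}(phi) / Q_{p,p+k}(1)) <= 2 ||phi|| rho^k with rho = 1 - (em/ep)^2.
   3. The key cancellation eta_p Q_{p+1} = lambda_p eta_{p+1} yields the "mass identity"
      eta_p Q_{p,p+k}(f) = (prod lambda) eta_{p+k}(f); hence the normalised ratio is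
      pointwise close to eta_{p+k}(phi), and Q_{p,p+k}(1) is within the factor ep/em of
      its eta_p-average.
   4. Integrating against mu' and a final real-arithmetic step give both estimates. *)

section \<open>Elementary estimates for finite weighted averages\<close>

lemma weighted_average_close:
  fixes w r :: "'i \<Rightarrow> real"
  assumes "finite I" "I \<noteq> {}" "\<forall>i\<in>I. w i > 0" "\<forall>i\<in>I. \<bar>c - r i\<bar> \<le> B"
  shows "\<bar>c - (\<Sum>i\<in>I. w i * r i) / (\<Sum>i\<in>I. w i)\<bar> \<le> B"
proof -
  have pos: "(\<Sum>i\<in>I. w i) > 0" using assms by (intro sum_pos) auto
  have "c - (\<Sum>i\<in>I. w i * r i) / (\<Sum>i\<in>I. w i) = (\<Sum>i\<in>I. w i * (c - r i)) / (\<Sum>i\<in>I. w i)"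
    using pos by (simp add: field_simps sum_distrib_left sum_subtractf sum_distrib_right)
  moreover have "\<bar>\<Sum>i\<in>I. w i * (c - r i)\<bar> \<le> (\<Sum>i\<in>I. w i * B)"
  proof -
    have "\<bar>\<Sum>i\<in>I. w i * (c - r i)\<bar> \<le> (\<Sum>i\<in>I. \<bar>w i * (c - r i)\<bar>)" by (rule sum_abs)
    also have "\<dots> \<le> (\<Sum>i\<in>I. w i * B)"
      using assms by (intro sum_mono) (auto simp: abs_mult intro: mult_left_mono)
    finally show ?thesis .
  qed
  moreover have "(\<Sum>i\<in>I. w i * B) = B * (\<Sum>i\<in>I. w i)" by (simp add: sum_distrib_left mult.commute)
  ultimately show ?thesis using pos by (simp add: abs_divide divide_le_eq)
qed

text \<open>Both vectors are split as \<open>t \<beta> + (\<alpha> - t \<beta>)\<close> after centring u at its minimum.\<close>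
lemma probability_vector_contraction:
  fixes \<alpha> \<beta> u :: "'i \<Rightarrow> real"
  assumes fin: "finite I" and sa: "sum \<alpha> I = 1" and sb: "sum \<beta> I = 1"
    and bpos: "\<forall>j\<in>I. \<beta> j \<ge> 0" and t1: "t \<le> 1"
    and ab: "\<forall>j\<in>I. t * \<beta> j \<le> \<alpha> j"
    and osc: "\<forall>i\<in>I. \<forall>j\<in>I. \<bar>u i - u j\<bar> \<le> D"
  shows "\<bar>\<Sum>j\<in>I. (\<alpha> j - \<beta> j) * u j\<bar> \<le> (1 - t) * D"
proof -
  have ne: "I \<noteq> {}" using sb by auto
  define m where "m = Min (u ` I)"
  have mle: "\<forall>j\<in>I. m \<le> u j" using fin by (auto simp: m_def)
  have "m \<in> u ` I" unfolding m_def using fin ne by (intro Min_in) auto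
  then obtain j0 where j0: "j0 \<in> I" "u j0 = m" by auto
  have ud: "\<forall>j\<in>I. u j - m \<le> D" using osc j0 by (metis abs_le_D1)
  have mass_zero: "(\<Sum>j\<in>I. \<alpha> j - \<beta> j) = 0" using sa sb by (simp add: sum_subtractf)
  have "(\<Sum>j\<in>I. (\<alpha> j - \<beta> j) * u j) = (\<Sum>j\<in>I. (\<alpha> j - \<beta> j) * (u j - m))"
    by (simp only: right_diff_distrib[of "\<alpha> _ - \<beta> _"] sum_subtractf sum_distrib_right[symmetric]
        mass_zero) (simp add: sa sb)
  also have "\<dots> = (\<Sum>j\<in>I. (\<alpha> j - t * \<beta> j) * (u j - m)) - (1 - t) * (\<Sum>j\<in>I. \<beta> j * (u j - m))"
    by (simp add: algebra_simps sum_subtractf sum_distrib_left sum.distrib)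
  finally have split: "(\<Sum>j\<in>I. (\<alpha> j - \<beta> j) * u j)
      = (\<Sum>j\<in>I. (\<alpha> j - t * \<beta> j) * (u j - m)) - (1 - t) * (\<Sum>j\<in>I. \<beta> j * (u j - m))" .
  have A0: "0 \<le> (\<Sum>j\<in>I. (\<alpha> j - t * \<beta> j) * (u j - m))"
    using ab mle by (intro sum_nonneg) auto
  have "(\<Sum>j\<in>I. (\<alpha> j - t * \<beta> j) * (u j - m)) \<le> (\<Sum>j\<in>I. (\<alpha> j - t * \<beta> j) * D)"
    using ab ud by (intro sum_mono mult_left_mono) auto
  also have "\<dots> = (1 - t) * D"
    using sa sb by (simp add: sum_distrib_right[symmetric] sum_subtractf sum_distrib_left[symmetric])
  finally have A1: "(\<Sum>j\<in>I. (\<alpha> j - t * \<beta> j) * (u j - m)) \<le> (1 - t) * D" .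
  have B0: "0 \<le> (\<Sum>j\<in>I. \<beta> j * (u j - m))" using bpos mle by (intro sum_nonneg) auto
  have "(\<Sum>j\<in>I. \<beta> j * (u j - m)) \<le> (\<Sum>j\<in>I. \<beta> j * D)"
    using bpos ud by (intro sum_mono mult_left_mono) auto
  also have "\<dots> = D" using sb by (simp add: sum_distrib_right[symmetric])
  finally have B1: "(\<Sum>j\<in>I. \<beta> j * (u j - m)) \<le> D" .
  have "0 \<le> (1 - t) * (\<Sum>j\<in>I. \<beta> j * (u j - m))" using t1 B0 by simp
  moreover have "(1 - t) * (\<Sum>j\<in>I. \<beta> j * (u j - m)) \<le> (1 - t) * D"
    using t1 B1 by (intro mult_left_mono) auto
  ultimately show ?thesis unfolding split using A0 A1 by linarith
qed

lemma comparable_weights_contraction: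
  fixes a b u :: "'i \<Rightarrow> real"
  assumes fin: "finite I" and ne: "I \<noteq> {}" and pos: "\<forall>j\<in>I. a j > 0 \<and> b j > 0"
    and s0: "0 \<le> s" and s1: "s \<le> 1"
    and ab: "\<forall>j\<in>I. s * b j \<le> a j" and ba: "\<forall>j\<in>I. s * a j \<le> b j"
    and osc: "\<forall>i\<in>I. \<forall>j\<in>I. \<bar>u i - u j\<bar> \<le> D"
  shows "\<bar>(\<Sum>j\<in>I. a j * u j) / (\<Sum>j\<in>I. a j) - (\<Sum>j\<in>I. b j * u j) / (\<Sum>j\<in>I. b j)\<bar> \<le> (1 - s\<^sup>2) * D"
proof -
  define A where "A = (\<Sum>j\<in>I. a j)"
  define B where "B = (\<Sum>j\<in>I. b j)"
  have A: "A > 0" unfolding A_def using fin ne pos by (intro sum_pos) auto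
  have B: "B > 0" unfolding B_def using fin ne pos by (intro sum_pos) auto
  have BA: "s * A \<le> B" unfolding A_def B_def using ba by (simp add: sum_distrib_left sum_mono)
  have sa: "(\<Sum>j\<in>I. a j / A) = 1" using A by (simp add: sum_divide_distrib[symmetric] A_def)
  have sb: "(\<Sum>j\<in>I. b j / B) = 1" using B by (simp add: sum_divide_distrib[symmetric] B_def)
  have normalised_ratio: "\<forall>j\<in>I. s\<^sup>2 * (b j / B) \<le> a j / A"
  proof
    fix j assume j: "j \<in> I"
    have "s * b j * (s * A) \<le> a j * B"
      using ab j BA pos s0 A by (intro mult_mono) auto
    then show "s\<^sup>2 * (b j / B) \<le> a j / A" using A B
      by (simp add: field_simps power2_eq_square)
  qed
  have "\<bar>\<Sum>j\<in>I. (a j / A - b j / B) * u j\<bar> \<le> (1 - s\<^sup>2) * D"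
    by (rule probability_vector_contraction[OF fin sa sb _ _ normalised_ratio osc])
       (use pos B s1 s0 in \<open>auto simp: power_le_one\<close>)
  moreover have "(\<Sum>j\<in>I. (a j / A - b j / B) * u j) = (\<Sum>j\<in>I. a j * u j) / A - (\<Sum>j\<in>I. b j * u j) / B"
    by (simp add: left_diff_distrib sum_subtractf sum_divide_distrib)
  ultimately show ?thesis by (simp add: A_def B_def)
qed

section \<open>Empirical measures\<close>

lemma emp_pos: "N \<ge> 1 \<Longrightarrow> \<forall>i<N. f (z i) > 0 \<Longrightarrow> emp N z f > 0"
  unfolding emp_def by (intro divide_pos_pos sum_pos) (auto simp: lessThan_empty_iff)

lemma emp_one: "N \<ge> 1 \<Longrightarrow> emp N z (\<lambda>_. 1) = 1"
  unfolding emp_def by simp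

lemma emp_cmult: "emp N z (\<lambda>x. c * f x) = c * emp N z f"
  unfolding emp_def by (simp add: sum_distrib_left)

lemma emp_le_const: "N \<ge> 1 \<Longrightarrow> \<forall>i<N. f (z i) \<le> c \<Longrightarrow> emp N z f \<le> c"
  unfolding emp_def using sum_mono[of "{..<N}" "\<lambda>i. f (z i)" "\<lambda>_. c"]
  by (simp add: divide_le_eq mult.commute)

lemma const_le_emp: "N \<ge> 1 \<Longrightarrow> \<forall>i<N. c \<le> f (z i) \<Longrightarrow> c \<le> emp N z f"
  unfolding emp_def using sum_mono[of "{..<N}" "\<lambda>_. c" "\<lambda>i. f (z i)"]
  by (simp add: le_divide_eq mult.commute)

lemma QN_Suc_expand:
  "QN G q N \<zeta> (Suc p) f x = (\<Sum>j<N. dQdPhi G q N (\<zeta> p) x (\<zeta> (Suc p) j) * f (\<zeta> (Suc p) j)) / real N"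
  unfolding QN_def emp_def by simp

lemma abs_le_supnorm:
  assumes "\<exists>B. \<forall>x\<in>space X. \<bar>\<phi> x\<bar> \<le> B" and "x \<in> space X"
  shows "\<bar>\<phi> x\<bar> \<le> supnorm X \<phi>"
proof -
  have "bdd_above ((\<lambda>x. \<bar>\<phi> x\<bar>) ` space X)" using assms(1) by (auto intro: bdd_aboveI2)
  then show ?thesis unfolding supnorm_def using assms(2) by (rule cSUP_upper2) auto
qed

section \<open>A fixed realisation of the particle system\<close>

text \<open>No measurability is needed except for
  integrability against \<open>\<mu>'\<close> at the very end.\<close>
locale particle_path =
  fixes X :: "'a measure" and G :: "'a \<Rightarrow> real" and q :: "'a \<Rightarrow> 'a \<Rightarrow> real"
    and em ep :: real and N :: nat and \<zeta> :: "nat \<Rightarrow> nat \<Rightarrow> 'a"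
  assumes N_ge: "N \<ge> 1" and zeta_space: "\<forall>k. \<forall>i<N. \<zeta> k i \<in> space X"
    and q_bounds: "\<forall>x\<in>space X. \<forall>y\<in>space X. em \<le> q x y \<and> q x y \<le> ep"
    and em_pos: "0 < em" and G_pos: "\<forall>x\<in>space X. 0 < G x"
begin

abbreviation eta :: "nat \<Rightarrow> ('a \<Rightarrow> real) \<Rightarrow> real"
  where "eta k f \<equiv> emp N (\<zeta> k) f"

abbreviation dens :: "nat \<Rightarrow> 'a \<Rightarrow> 'a \<Rightarrow> real"
  where "dens p x y \<equiv> dQdPhi G q N (\<zeta> p) x y"

abbreviation Qk :: "nat \<Rightarrow> nat \<Rightarrow> ('a \<Rightarrow> real) \<Rightarrow> 'a \<Rightarrow> real"
  where "Qk p k f \<equiv> QNpk G q N \<zeta> p k f"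

lemma zeta_in_space: "i < N \<Longrightarrow> \<zeta> k i \<in> space X"
  using zeta_space by auto

lemma em_le_ep: "em \<le> ep"
  using q_bounds zeta_in_space[of 0 0] N_ge by force

lemma ep_pos: "0 < ep"
  using em_pos em_le_ep by linarith

lemma eta_G_pos: "eta p G > 0"
  using G_pos zeta_in_space N_ge by (intro emp_pos) auto

lemma eta_q_pos: "y \<in> space X \<Longrightarrow> eta p (\<lambda>w. q w y) > 0"
  using q_bounds zeta_in_space N_ge em_pos by (intro emp_pos) (auto intro: less_le_trans)

lemma dens_pos: "x \<in> space X \<Longrightarrow> y \<in> space X \<Longrightarrow> dens p x y > 0"
  unfolding dQdPhi_def using q_bounds em_pos eta_G_pos eta_q_pos
  by (intro divide_pos_pos mult_pos_pos) (auto intro: less_le_trans)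

lemma dens_ratio:
  assumes x: "x \<in> space X" and x': "x' \<in> space X" and y: "y \<in> space X"
  shows "(em / ep) * dens p x' y \<le> dens p x y"
proof -
  define c where "c = eta p G / eta p (\<lambda>w. q w y)"
  have c: "c > 0" unfolding c_def using eta_G_pos eta_q_pos[OF y] by simp
  have "(em / ep) * q x' y \<le> em"
    using q_bounds x' y ep_pos em_pos by (auto simp: field_simps intro: mult_left_mono)
  also have "\<dots> \<le> q x y" using q_bounds x y by auto
  finally have "(em / ep) * q x' y * c \<le> q x y * c" using c by (intro mult_right_mono) auto
  then show ?thesis unfolding dQdPhi_def c_def by (simp add: mult.assoc)
qed

lemma Qk_one_pos: "x \<in> space X \<Longrightarrow> Qk p k (\<lambda>_. 1) x > 0"
proof (induction k arbitrary: p x)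
  case 0 then show ?case by simp
next
  case (Suc k)
  show ?case unfolding QNpk.simps QN_Suc_expand using N_ge Suc zeta_in_space dens_pos
    by (intro divide_pos_pos sum_pos mult_pos_pos) (auto simp: lessThan_empty_iff)
qed

lemma QN_ratio:
  assumes x: "x \<in> space X" and x': "x' \<in> space X" and g: "\<forall>j<N. g (\<zeta> (Suc p) j) \<ge> 0"
  shows "(em / ep) * QN G q N \<zeta> (Suc p) g x' \<le> QN G q N \<zeta> (Suc p) g x"
proof -
  have "(em / ep) * (\<Sum>j<N. dens p x' (\<zeta> (Suc p) j) * g (\<zeta> (Suc p) j))
      = (\<Sum>j<N. ((em / ep) * dens p x' (\<zeta> (Suc p) j)) * g (\<zeta> (Suc p) j))"
    by (simp add: sum_distrib_left mult.assoc)
  also have "\<dots> \<le> (\<Sum>j<N. dens p x (\<zeta> (Suc p) j) * g (\<zeta> (Suc p) j))"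
    using g dens_ratio[OF x x'] zeta_in_space by (intro sum_mono mult_right_mono) auto
  finally show ?thesis
    unfolding QN_Suc_expand times_divide_eq_right by (rule divide_right_mono) simp
qed

text \<open>The basic cancellation \<open>\<eta>_p Q^N_{p+1} = \<lambda>_p \<eta>_{p+1}\<close>: the normalising factors in
  dQ/dPhi are exactly the \<open>\<eta>_p\<close>-averages of q.\<close>
lemma eta_QN: "eta p (QN G q N \<zeta> (Suc p) g) = eta p G * eta (Suc p) g"
proof -
  define L where "L = eta p G"
  define E where "E = (\<lambda>j. eta p (\<lambda>w. q w (\<zeta> (Suc p) j)))"
  define y where "y = \<zeta> (Suc p)"
  have Ep: "j < N \<Longrightarrow> E j > 0" for j unfolding E_def using eta_q_pos zeta_in_space by auto
  have "eta p (QN G q N \<zeta> (Suc p) g)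
      = (\<Sum>i<N. (\<Sum>j<N. q (\<zeta> p i) (y j) * (L / E j * g (y j))) / real N) / real N"
    unfolding emp_def QN_Suc_expand dQdPhi_def L_def E_def y_def
    by (auto intro!: arg_cong[where f="\<lambda>t. t / real N"] sum.cong)
  also have "\<dots> = (\<Sum>j<N. (\<Sum>i<N. q (\<zeta> p i) (y j) * (L / E j * g (y j))) / real N) / real N"
    by (simp add: sum_divide_distrib) (rule sum.swap)
  also have "\<dots> = (\<Sum>j<N. E j * (L / E j * g (y j))) / real N"
  proof (intro arg_cong[where f="\<lambda>t. t / real N"] sum.cong refl)
    fix j
    have "E j = (\<Sum>i<N. q (\<zeta> p i) (y j)) / real N" by (simp add: E_def emp_def y_def)
    then show "(\<Sum>i<N. q (\<zeta> p i) (y j) * (L / E j * g (y j))) / real N = E j * (L / E j * g (y j))"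
      by (simp only: sum_distrib_right[symmetric]) simp
  qed
  also have "\<dots> = (\<Sum>j<N. L * g (y j)) / real N"
    using Ep by (intro arg_cong[where f="\<lambda>t. t / real N"] sum.cong) (auto dest!: Ep)
  finally show ?thesis by (simp add: L_def emp_def sum_distrib_left y_def)
qed

lemma eta_Qk: "eta p (Qk p k f) = (\<Prod>i<k. eta (p + i) G) * eta (p + k) f"
proof (induction k arbitrary: p)
  case 0 then show ?case by simp
next
  case (Suc k)
  have "eta p (Qk p (Suc k) f) = eta p G * ((\<Prod>i<k. eta (Suc p + i) G) * eta (Suc p + k) f)"
    by (simp add: eta_QN Suc.IH)
  also have "\<dots> = (\<Prod>i<Suc k. eta (p + i) G) * eta (p + Suc k) f"
    by (subst prod.lessThan_Suc_shift) simp
  finally show ?case .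
qed

text \<open>One step writes the ratio as a weighted average, with weights
  \<open>dens p x (\<zeta>_{p+1}^j) Q_{p+1,p+k}(1)(\<zeta>_{p+1}^j)\<close>, of the ratio one step later.\<close>
lemma ratio_oscillation:
  assumes phi: "\<forall>x\<in>space X. \<bar>\<phi> x\<bar> \<le> \<Phi>" and x: "x \<in> space X" and x': "x' \<in> space X"
  shows "\<bar>Qk p k \<phi> x / Qk p k (\<lambda>_. 1) x - Qk p k \<phi> x' / Qk p k (\<lambda>_. 1) x'\<bar>
           \<le> 2 * \<Phi> * (1 - (em / ep)\<^sup>2) ^ k"
  using x x'
proof (induction k arbitrary: p x x')
  case 0
  then show ?case using phi by (simp, smt (verit))
next
  case (Suc k)
  define y where "y = \<zeta> (Suc p)"
  define g where "g = Qk (Suc p) k (\<lambda>_. 1)"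
  define u where "u = (\<lambda>j. Qk (Suc p) k \<phi> (y j) / g (y j))"
  define w where "w = (\<lambda>z j. dens p z (y j) * g (y j))"
  have y_space: "j < N \<Longrightarrow> y j \<in> space X" for j using zeta_in_space by (simp add: y_def)
  have g_pos: "j < N \<Longrightarrow> g (y j) > 0" for j unfolding g_def using Qk_one_pos y_space by auto
  have average: "Qk p (Suc k) \<phi> z / Qk p (Suc k) (\<lambda>_. 1) z
      = (\<Sum>j<N. w z j * u j) / (\<Sum>j<N. w z j)" for z
  proof -
    have "(\<Sum>j<N. dens p z (y j) * Qk (Suc p) k \<phi> (y j)) = (\<Sum>j<N. w z j * u j)"
      using g_pos by (intro sum.cong) (auto simp: u_def w_def dest!: g_pos)
    then show ?thesis unfolding QNpk.simps QN_Suc_expand using N_ge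
      by (simp add: g_def[symmetric] y_def[symmetric] w_def)
  qed
  have weights_comparable: "em / ep * w z' j \<le> w z j"
    if "z \<in> space X" "z' \<in> space X" "j \<in> {..<N}" for z z' j
  proof -
    have j: "j < N" using that by simp
    have "em / ep * dens p z' (y j) \<le> dens p z (y j)"
      using dens_ratio that y_space[OF j] by auto
    from mult_right_mono[OF this less_imp_le[OF g_pos[OF j]]] show ?thesis
      unfolding w_def by (simp add: mult.assoc)
  qed
  have "\<bar>(\<Sum>j<N. w x j * u j) / (\<Sum>j<N. w x j) - (\<Sum>j<N. w x' j * u j) / (\<Sum>j<N. w x' j)\<bar>
     \<le> (1 - (em / ep)\<^sup>2) * (2 * \<Phi> * (1 - (em / ep)\<^sup>2) ^ k)"
  proof (rule comparable_weights_contraction)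
    show "{..<N} \<noteq> {}" using N_ge by (auto simp: lessThan_empty_iff)
    show "\<forall>j\<in>{..<N}. 0 < w x j \<and> 0 < w x' j" unfolding w_def
      using g_pos dens_pos Suc.prems y_space by auto
    show "em / ep \<le> 1" using em_pos em_le_ep by simp
    show "\<forall>i\<in>{..<N}. \<forall>j\<in>{..<N}. \<bar>u i - u j\<bar> \<le> 2 * \<Phi> * (1 - (em / ep)\<^sup>2) ^ k"
      unfolding u_def g_def using Suc.IH y_space by auto
  qed (use weights_comparable Suc.prems em_pos ep_pos in auto)
  then show ?case unfolding average by (simp add: mult.commute mult.left_commute)
qed

text \<open>Since \<open>\<eta>_{p+k}(\<phi>) = \<eta>_p Q_{p,p+k}(\<phi>) / \<eta>_p Q_{p,p+k}(1)\<close> is itself a weighted average of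
  the normalised ratio, the ratio is everywhere close to \<open>\<eta>_{p+k}(\<phi>)\<close>; we state this in
  the multiplied-out form \<open>|Q(\<phi>) - Q(1) \<eta>_{p+k}(\<phi>)| \<le> Q(1) \<cdot> 2\<Phi>\<rho>^k\<close> that gets integrated.\<close>
lemma Qk_close_to_eta:
  assumes phi: "\<forall>x\<in>space X. \<bar>\<phi> x\<bar> \<le> \<Phi>" and x: "x \<in> space X"
  shows "\<bar>Qk p k \<phi> x - Qk p k (\<lambda>_. 1) x * eta (p + k) \<phi>\<bar>
           \<le> Qk p k (\<lambda>_. 1) x * (2 * \<Phi> * (1 - (em / ep)\<^sup>2) ^ k)"
proof -
  define S where "S = Qk p k (\<lambda>_. 1)"
  define T where "T = Qk p k \<phi>"
  define Z where "Z = (\<Prod>i<k. eta (p + i) G)"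
  have S_pos: "i < N \<Longrightarrow> S (\<zeta> p i) > 0" for i unfolding S_def using Qk_one_pos zeta_in_space by auto
  have "Z > 0" unfolding Z_def using eta_G_pos by (intro prod_pos) auto
  moreover have "eta p S = Z" "eta p T = Z * eta (p + k) \<phi>"
    unfolding S_def T_def Z_def eta_Qk by (simp_all add: emp_one[OF N_ge])
  ultimately have "eta (p + k) \<phi> = eta p T / eta p S" by simp
  also have "\<dots> = (\<Sum>i<N. T (\<zeta> p i)) / (\<Sum>i<N. S (\<zeta> p i))"
    using N_ge by (simp add: emp_def)
  also have "\<dots> = (\<Sum>i<N. S (\<zeta> p i) * (T (\<zeta> p i) / S (\<zeta> p i))) / (\<Sum>i<N. S (\<zeta> p i))"
    using S_pos by (intro arg_cong2[where f="(/)"] sum.cong) (auto dest!: S_pos)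
  finally have eta_avg: "eta (p + k) \<phi> = \<dots>" .
  have "\<bar>T x / S x - eta (p + k) \<phi>\<bar> \<le> 2 * \<Phi> * (1 - (em / ep)\<^sup>2) ^ k"
    unfolding eta_avg
    by (rule weighted_average_close)
       (use N_ge S_pos zeta_in_space ratio_oscillation[OF phi] x in
        \<open>auto simp: lessThan_empty_iff S_def T_def\<close>)
  moreover have Sx: "S x > 0" unfolding S_def by (rule Qk_one_pos[OF x])
  moreover have "T x - S x * eta (p + k) \<phi> = S x * (T x / S x - eta (p + k) \<phi>)"
    using Sx by (simp add: field_simps)
  ultimately have "\<bar>T x - S x * eta (p + k) \<phi>\<bar> \<le> S x * (2 * \<Phi> * (1 - (em / ep)\<^sup>2) ^ k)"
    by (simp add: abs_mult)
  then show ?thesis by (simp add: S_def T_def)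
qed

lemma mass_comparable:
  fixes p k :: nat
  assumes x: "x \<in> space X"
  defines "Z \<equiv> \<Prod>i<Suc k. eta (p + i) G"
  shows "(em / ep) * Z \<le> Qk p (Suc k) (\<lambda>_. 1) x \<and> Qk p (Suc k) (\<lambda>_. 1) x \<le> (ep / em) * Z"
proof -
  define S where "S = Qk p (Suc k) (\<lambda>_. 1)"
  have S_ratio: "(em / ep) * S x' \<le> S x''" if "x' \<in> space X" "x'' \<in> space X" for x' x''
    unfolding S_def QNpk.simps
    by (rule QN_ratio) (use that Qk_one_pos zeta_in_space in \<open>auto intro: less_imp_le\<close>)
  have eta_S: "eta p S = Z" unfolding S_def Z_def eta_Qk by (simp add: emp_one[OF N_ge])
  have "(em / ep) * eta p S \<le> S x"
    unfolding emp_cmult[symmetric] using N_ge S_ratio x zeta_in_space by (intro emp_le_const) auto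
  moreover have "(em / ep) * S x \<le> eta p S"
    using N_ge S_ratio x zeta_in_space by (intro const_le_emp) auto
  ultimately have "(em / ep) * Z \<le> S x \<and> S x \<le> (ep / em) * Z"
    using em_pos ep_pos by (simp add: eta_S field_simps)
  then show ?thesis by (simp add: S_def)
qed

text \<open>\<open>Q^N_{p+1}(g)\<close> is a finite combination of sections of the measurable bounded density q,
  hence integrable against any probability measure on X.\<close>
lemma QN_integrable:
  assumes q_meas: "(\<lambda>(x, y). q x y) \<in> borel_measurable (X \<Otimes>\<^sub>M X)"
    and mu: "prob_space \<mu>" and mu_sets: "sets \<mu> = sets X"
  shows "integrable \<mu> (QN G q N \<zeta> (Suc p) g)"
proof -
  interpret mu: prob_space \<mu> by fact
  have sp: "space \<mu> = space X" using mu_sets sets_eq_imp_space_eq by blast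
  have q_section: "y \<in> space X \<Longrightarrow> (\<lambda>x. q x y) \<in> borel_measurable X" for y
    using measurable_comp[OF measurable_Pair2'[of y X X] q_meas] by (simp add: o_def)
  define c where "c = (\<lambda>j. eta p G / eta p (\<lambda>w. q w (\<zeta> (Suc p) j)) * g (\<zeta> (Suc p) j))"
  have QN_eq: "QN G q N \<zeta> (Suc p) g = (\<lambda>x. (\<Sum>j<N. q x (\<zeta> (Suc p) j) * c j) / real N)"
    by (rule ext) (simp add: QN_Suc_expand dQdPhi_def c_def mult.assoc)
  have meas: "QN G q N \<zeta> (Suc p) g \<in> borel_measurable X"
    unfolding QN_eq using q_section zeta_in_space by measurable
  have bound: "\<bar>QN G q N \<zeta> (Suc p) g x\<bar> \<le> (\<Sum>j<N. ep * \<bar>c j\<bar>) / real N"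
    if x: "x \<in> space X" for x
  proof -
    have "\<bar>\<Sum>j<N. q x (\<zeta> (Suc p) j) * c j\<bar> \<le> (\<Sum>j<N. \<bar>q x (\<zeta> (Suc p) j) * c j\<bar>)"
      by (rule sum_abs)
    also have "\<dots> \<le> (\<Sum>j<N. ep * \<bar>c j\<bar>)"
    proof (rule sum_mono)
      fix j assume "j \<in> {..<N}"
      then have "\<bar>q x (\<zeta> (Suc p) j)\<bar> \<le> ep"
        using q_bounds x zeta_in_space em_pos by (fastforce simp: abs_le_iff)
      then show "\<bar>q x (\<zeta> (Suc p) j) * c j\<bar> \<le> ep * \<bar>c j\<bar>"
        by (simp add: abs_mult mult_right_mono)
    qed
    finally show ?thesis unfolding QN_eq by (simp add: divide_right_mono)
  qed
  show ?thesis
    by (rule mu.integrable_const_bound[where B="(\<Sum>j<N. ep * \<bar>c j\<bar>) / real N"])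
       (use bound sp meas measurable_cong_sets[OF mu_sets refl] in auto)
qed

end

section \<open>Integration and the final estimate\<close>

lemma integral_relative_deviation:
  fixes S T :: "'a \<Rightarrow> real"
  assumes "integrable \<mu> S" "integrable \<mu> T"
    and "\<forall>x\<in>space \<mu>. \<bar>T x - S x * c\<bar> \<le> S x * B"
  shows "\<bar>(\<integral>x. T x \<partial>\<mu>) - (\<integral>x. S x \<partial>\<mu>) * c\<bar> \<le> B * (\<integral>x. S x \<partial>\<mu>)"
proof -
  have "(\<integral>x. T x \<partial>\<mu>) - (\<integral>x. S x \<partial>\<mu>) * c = (\<integral>x. T x - S x * c \<partial>\<mu>)"
    using assms by simp
  also have "\<bar>\<dots>\<bar> \<le> (\<integral>x. \<bar>T x - S x * c\<bar> \<partial>\<mu>)"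
    by (rule integral_abs_bound)
  also have "\<dots> \<le> (\<integral>x. S x * B \<partial>\<mu>)"
    using assms by (intro integral_mono) auto
  finally show ?thesis by (simp add: mult.commute)
qed

lemma normalised_estimates:
  fixes L IS IT c B r :: real
  assumes L: "L > 0" and IS: "IS > 0" "IS \<le> r * L"
    and dev: "\<bar>IT - IS * c\<bar> \<le> B * IS" and B: "0 \<le> B" and r: "1 \<le> r"
  shows "\<bar>inverse L * IT - IS / L * c\<bar> \<le> B * r \<and> \<bar>IT / IS - c\<bar> \<le> B * r\<^sup>2"
proof
  have "\<bar>inverse L * IT - IS / L * c\<bar> = \<bar>IT - IS * c\<bar> / L"
    using L by (simp add: field_simps abs_divide)
  also have "\<dots> \<le> B * (r * L) / L"
    using dev IS B L by (intro divide_right_mono order.trans[OF dev] mult_left_mono) auto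
  finally show "\<bar>inverse L * IT - IS / L * c\<bar> \<le> B * r" using L by simp
next
  have "\<bar>IT / IS - c\<bar> = \<bar>IT - IS * c\<bar> / IS" using IS by (simp add: field_simps abs_divide)
  also have "\<dots> \<le> B" using dev IS by (simp add: divide_le_eq)
  also have "\<dots> \<le> B * r\<^sup>2" using B r by (simp add: one_le_power mult_le_cancel_left1)
  finally show "\<bar>IT / IS - c\<bar> \<le> B * r\<^sup>2" .
qed

theorem theorem2:
  fixes X :: "'a measure" and G :: "'a \<Rightarrow> real" and M :: "'a \<Rightarrow> 'a measure"
    and \<nu> :: "'a measure" and q :: "'a \<Rightarrow> 'a \<Rightarrow> real" and em ep :: real
    and n N :: nat and \<phi> :: "'a \<Rightarrow> real" and \<mu>' :: "'a measure"
    and \<zeta> :: "nat \<Rightarrow> nat \<Rightarrow> 'a"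
  assumes cg: "countably_generated X"
    and G_meas: "G \<in> borel_measurable X"
    and G_pos: "\<forall>x\<in>space X. 0 < G x"
    and G_bdd: "\<exists>B. \<forall>x\<in>space X. G x \<le> B"
    and M_kernel: "M \<in> measurable X (subprob_algebra X)"
    and M_prob: "\<forall>x\<in>space X. prob_space (M x)"
    and nu_prob: "prob_space \<nu>" and nu_sets: "sets \<nu> = sets X"
    and em_pos: "0 < em" and ep_pos: "0 < ep"
    and q_meas: "(\<lambda>(x, y). q x y) \<in> borel_measurable (X \<Otimes>\<^sub>M X)"
    and q_bounds: "\<forall>x\<in>space X. \<forall>y\<in>space X. em \<le> q x y \<and> q x y \<le> ep"
    and q_density: "\<forall>x\<in>space X. \<forall>A\<in>sets X. G x * measure (M x) A = (LINT y:A|\<nu>. q x y)"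
    and n_ge: "n \<ge> 1"
    and phi_meas: "\<phi> \<in> borel_measurable X"
    and phi_bdd: "\<exists>B. \<forall>x\<in>space X. \<bar>\<phi> x\<bar> \<le> B"
    and mu_prob: "prob_space \<mu>'" and mu_sets: "sets \<mu>' = sets X"
    and N_ge: "N \<ge> 1"
    and zeta_space: "\<forall>k. \<forall>i<N. \<zeta> k i \<in> space X"
  shows "\<bar>inverse (\<Prod>p<n. lambdaN G N \<zeta> p) * (\<integral>x. QNpn G q N \<zeta> 0 n \<phi> x \<partial>\<mu>')
            - (\<integral>x. hN G q N \<zeta> 0 n x \<partial>\<mu>') * emp N (\<zeta> n) \<phi>\<bar>
          \<le> 2 * supnorm X \<phi> * (1 - (em / ep)\<^sup>2) ^ n * (ep / em)
       \<and> \<bar>(\<integral>x. QNpn G q N \<zeta> 0 n \<phi> x \<partial>\<mu>') / (\<integral>x. QNpn G q N \<zeta> 0 n (\<lambda>_. 1) x \<partial>\<mu>')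
            - emp N (\<zeta> n) \<phi>\<bar>
          \<le> 2 * supnorm X \<phi> * (1 - (em / ep)\<^sup>2) ^ n * (ep / em)\<^sup>2"
proof -
  interpret particle_path X G q em ep N \<zeta>
    by unfold_locales (use N_ge zeta_space q_bounds em_pos G_pos in auto)
  interpret mu: prob_space \<mu>' by (rule mu_prob)
  obtain k where n: "n = Suc k" using n_ge by (cases n) auto
  define S where "S = Qk 0 n (\<lambda>_. 1)"
  define T where "T = Qk 0 n \<phi>"
  define Z where "Z = (\<Prod>p<n. lambdaN G N \<zeta> p)"
  define B where "B = 2 * supnorm X \<phi> * (1 - (em / ep)\<^sup>2) ^ n"
  have space_mu: "space \<mu>' = space X" using mu_sets sets_eq_imp_space_eq by blast
  have phi_le: "\<forall>x\<in>space X. \<bar>\<phi> x\<bar> \<le> supnorm X \<phi>" using abs_le_supnorm[OF phi_bdd] by blast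
  have "0 \<le> supnorm X \<phi>" using phi_le zeta_in_space[of 0 0] N_ge by force
  then have B_nonneg: "0 \<le> B" unfolding B_def using em_pos em_le_ep by (simp add: power_le_one)
  have Z_pos: "Z > 0" unfolding Z_def lambdaN_def using eta_G_pos by (intro prod_pos) auto
  have eta_S: "eta 0 S = Z" unfolding S_def Z_def lambdaN_def eta_Qk by (simp add: emp_one[OF N_ge])
  have S_bounds: "(em / ep) * Z \<le> S x \<and> S x \<le> (ep / em) * Z" if "x \<in> space X" for x
    using mass_comparable[OF that, of 0 k] unfolding S_def Z_def lambdaN_def n by simp
  have int_S: "integrable \<mu>' S" and int_T: "integrable \<mu>' T"
    unfolding S_def T_def n QNpk.simps using QN_integrable[OF q_meas mu_prob mu_sets] by auto
  have int_S_bounds: "(em / ep) * Z \<le> (\<integral>x. S x \<partial>\<mu>') \<and> (\<integral>x. S x \<partial>\<mu>') \<le> (ep / em) * Z"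
    using S_bounds space_mu by (auto intro!: mu.integral_ge_const mu.integral_le_const int_S)
  have dev: "\<bar>(\<integral>x. T x \<partial>\<mu>') - (\<integral>x. S x \<partial>\<mu>') * emp N (\<zeta> n) \<phi>\<bar> \<le> B * (\<integral>x. S x \<partial>\<mu>')"
    using Qk_close_to_eta[OF phi_le, of _ 0 n] space_mu
    by (intro integral_relative_deviation int_S int_T) (simp add: S_def T_def B_def)
  have int_h: "(\<integral>x. hN G q N \<zeta> 0 n x \<partial>\<mu>') = (\<integral>x. S x \<partial>\<mu>') / Z"
    using n_ge eta_S by (simp add: hN_def QNpn_def S_def)
  have "0 < (\<integral>x. S x \<partial>\<mu>')"
    using int_S_bounds Z_pos em_pos ep_pos by (smt (verit) divide_pos_pos mult_pos_pos)
  moreover have "(\<integral>x. S x \<partial>\<mu>') \<le> (ep / em) * Z" "1 \<le> ep / em"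
    using int_S_bounds em_pos em_le_ep by (simp_all add: mult.commute)
  ultimately have "\<bar>inverse Z * (\<integral>x. T x \<partial>\<mu>') - (\<integral>x. S x \<partial>\<mu>') / Z * emp N (\<zeta> n) \<phi>\<bar> \<le> B * (ep / em)
      \<and> \<bar>(\<integral>x. T x \<partial>\<mu>') / (\<integral>x. S x \<partial>\<mu>') - emp N (\<zeta> n) \<phi>\<bar> \<le> B * (ep / em)\<^sup>2"
    using normalised_estimates[OF Z_pos _ _ dev B_nonneg] by blast
  then show ?thesis unfolding int_h QNpn_def by (simp add: S_def T_def Z_def B_def mult.assoc)
qed

end
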